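(* Let $q\geq 2$ and $N,n$ be positive integers. Then $f_{q,q-1}(N)\leq n$ if and only if $F_{q,q-1}(n)\geq N$.
   Context: $[n]=\{1,\dots,n\}$. An ordered complete graph on $N$ vertices is the complete graph on $[N]$ with its natural order; a path in it is monotone if its vertices, in traversal order, are strictly increasing; its length is its number of vertices. For a $q$-edge-colored ordered complete graph $K$ (colors in $[q]$), $f_{q,r}(K)$ is the maximum length of a monotone path in $K$ whose edges use at most $r$ colors, and $f_{q,r}(N)$ is the minimum of $f_{q,r}(K)$ over all $q$-edge-colored ordered complete graphs $K$ on $N$ vertices. For $x,y\in\mathbb{R}^q$, $x<_r y$ means there are at least $r$ coordinates $i$ with $x_i<y_i$; $F_{q,r}(n)$ is the maximum $N$ such that there exist $x_1,\dots,x_N\in[n]^q$ with $x_a<_r x_b$ for all $a<b$. *)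

theory Defs
  imports Main
begin

text \<open>A q-edge-colouring of the ordered complete graph on [N] = {1..N}: every edge {a,b}
  with a < b gets a colour c a b in [q] = {1..q}. (Only the values for a < b matter.)\<close>
definition edge_colouring :: "nat \<Rightarrow> nat \<Rightarrow> (nat \<Rightarrow> nat \<Rightarrow> nat) \<Rightarrow> bool" where
  "edge_colouring q N c \<longleftrightarrow> (\<forall>a b. 1 \<le> a \<and> a < b \<and> b \<le> N \<longrightarrow> c a b \<in> {1..q})"

text \<open>A monotone path in the ordered complete graph on [N], given by its vertex list in
  traversal order (strictly increasing, nonempty); its length is its number of vertices.\<close>
definition mono_path :: "nat \<Rightarrow> nat list \<Rightarrow> bool" where
  "mono_path N vs \<longleftrightarrow> vs \<noteq> [] \<and> sorted_wrt (<) vs \<and> set vs \<subseteq> {1..N}"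

definition path_colours :: "(nat \<Rightarrow> nat \<Rightarrow> nat) \<Rightarrow> nat list \<Rightarrow> nat set" where
  "path_colours c vs = {c (vs ! i) (vs ! (i + 1)) | i. i + 1 < length vs}"

definition f_col :: "nat \<Rightarrow> nat \<Rightarrow> (nat \<Rightarrow> nat \<Rightarrow> nat) \<Rightarrow> nat" where
  "f_col N r c = Max {length vs | vs. mono_path N vs \<and> card (path_colours c vs) \<le> r}"

definition f_qr :: "nat \<Rightarrow> nat \<Rightarrow> nat \<Rightarrow> nat" where
  "f_qr q r N = Min {f_col N r c | c. edge_colouring q N c}"

definition lt_r :: "nat \<Rightarrow> nat \<Rightarrow> (nat \<Rightarrow> nat) \<Rightarrow> (nat \<Rightarrow> nat) \<Rightarrow> bool" where
  "lt_r q r x y \<longleftrightarrow> card {i \<in> {1..q}. x i < y i} \<ge> r"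

definition F_qr :: "nat \<Rightarrow> nat \<Rightarrow> nat \<Rightarrow> nat" where
  "F_qr q r n = Max {N. \<exists>x :: nat \<Rightarrow> nat \<Rightarrow> nat.
      (\<forall>a \<in> {1..N}. \<forall>i \<in> {1..q}. x a i \<in> {1..n}) \<and>
      (\<forall>a b. 1 \<le> a \<and> a < b \<and> b \<le> N \<longrightarrow> lt_r q r (x a) (x b))}"

end

theory Submission
  imports Defs "HOL-Library.FuncSet"
begin

text \<open>Given a colouring, label each vertex a by the vector whose i-th coordinate is the length
  of the longest monotone path ending at a that avoids colour i. Appending an edge ab of colour k
  to such paths shows that every coordinate except the k-th strictly increases from a to b, so the
  labels form a (q-1)-chain in [f]^q, where f bounds the length of paths using at most q-1
  colours. Conversely, in a (q-1)-chain at most one coordinate fails to increase from x_a to x_b;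
  colour the edge ab by such a coordinate. A monotone path using at most q-1 colours misses some
  colour i, so the i-th coordinate strictly increases along it and its length is at most n.\<close>

lemma strict_sorted_length_le:
  fixes xs :: "nat list"
  assumes "sorted_wrt (<) xs" and "set xs \<subseteq> {1..n}"
  shows "length xs \<le> n"
proof -
  have "length xs = card (set xs)"
    using assms(1) by (simp add: strict_sorted_iff distinct_card)
  also have "\<dots> \<le> card {1..n}"
    using assms(2) by (intro card_mono) auto
  finally show ?thesis by simp
qed

lemma mono_path_length_le: "mono_path N vs \<Longrightarrow> length vs \<le> N"
  unfolding mono_path_def by (blast intro: strict_sorted_length_le)

lemma mono_path_edge:
  assumes "mono_path N vs" and "k + 1 < length vs"
  shows "1 \<le> vs ! k \<and> vs ! k < vs ! (k + 1) \<and> vs ! (k + 1) \<le> N"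
proof -
  have "vs ! k < vs ! (k + 1)"
    using assms by (auto simp: mono_path_def intro: sorted_wrt_nth_less)
  moreover have "vs ! k \<in> set vs" and "vs ! (k + 1) \<in> set vs"
    using assms(2) by auto
  ultimately show ?thesis
    using assms(1) by (auto simp: mono_path_def)
qed

lemma mono_path_snoc:
  assumes "mono_path N vs" and "last vs < b" and "b \<le> N"
  shows "mono_path N (vs @ [b])"
proof -
  obtain ys where ys: "vs = ys @ [last vs]"
    using assms(1) by (metis append_butlast_last_id mono_path_def)
  then have "sorted_wrt (<) (ys @ [last vs])"
    using assms(1) by (simp add: mono_path_def)
  then have "\<forall>v \<in> set vs. v \<le> last vs"
    by (subst ys) (auto simp: sorted_wrt_append)
  then show ?thesis
    using assms by (fastforce simp: mono_path_def sorted_wrt_append)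
qed

lemma path_colours_snoc_subset:
  assumes "vs \<noteq> []"
  shows "path_colours c (vs @ [b]) \<subseteq> insert (c (last vs) b) (path_colours c vs)"
proof
  fix z
  assume "z \<in> path_colours c (vs @ [b])"
  then obtain i where z: "z = c ((vs @ [b]) ! i) ((vs @ [b]) ! (i + 1))" and "i < length vs"
    by (auto simp: path_colours_def)
  then consider "i + 1 < length vs" | "i = length vs - 1"
    by linarith
  then show "z \<in> insert (c (last vs) b) (path_colours c vs)"
  proof cases
    case 1
    then show ?thesis
      using z by (auto simp: path_colours_def nth_append)
  next
    case 2
    then show ?thesis
      using z assms by (simp add: nth_append last_conv_nth)
  qed
qed

lemma path_colours_subset:
  "edge_colouring q N c \<Longrightarrow> mono_path N vs \<Longrightarrow> path_colours c vs \<subseteq> {1..q}"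
  unfolding path_colours_def edge_colouring_def using mono_path_edge by blast

lemma finite_mono_path_lengths: "finite {length vs | vs. mono_path N vs \<and> P vs}"
  by (rule finite_subset[of _ "{..N}"]) (auto dest: mono_path_length_le)

lemma f_col_le_iff:
  assumes "1 \<le> N"
  shows "f_col N r c \<le> n \<longleftrightarrow>
    (\<forall>vs. mono_path N vs \<and> card (path_colours c vs) \<le> r \<longrightarrow> length vs \<le> n)"
proof -
  have "mono_path N [1] \<and> card (path_colours c [1]) \<le> r"
    using assms by (simp add: mono_path_def path_colours_def)
  then have "{length vs | vs. mono_path N vs \<and> card (path_colours c vs) \<le> r} \<noteq> {}"
    by blast
  then show ?thesis
    unfolding f_col_def by (subst Max_le_iff[OF finite_mono_path_lengths]) auto
qed

lemma f_qr_le_iff: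
  assumes "1 \<le> q" and "1 \<le> N"
  shows "f_qr q r N \<le> n \<longleftrightarrow> (\<exists>c. edge_colouring q N c \<and> f_col N r c \<le> n)"
proof -
  let ?T = "{f_col N r c | c. edge_colouring q N c}"
  have "f_col N r c \<le> N" for c
    by (rule f_col_le_iff[OF assms(2), THEN iffD2]) (blast intro: mono_path_length_le)
  then have "?T \<subseteq> {..N}"
    by auto
  then have "finite ?T"
    by (rule finite_subset) simp
  moreover have "edge_colouring q N (\<lambda>_ _. 1)"
    using assms(1) by (simp add: edge_colouring_def)
  then have "?T \<noteq> {}"
    by blast
  ultimately have "Min ?T \<le> n \<longleftrightarrow> (\<exists>m \<in> ?T. m \<le> n)"
    by (rule Min_le_iff)
  then show ?thesis
    unfolding f_qr_def by blast
qed

definition lt_r_chain :: "nat \<Rightarrow> nat \<Rightarrow> nat \<Rightarrow> nat \<Rightarrow> (nat \<Rightarrow> nat \<Rightarrow> nat) \<Rightarrow> bool" where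
  "lt_r_chain q r n N x \<longleftrightarrow>
    (\<forall>a \<in> {1..N}. \<forall>i \<in> {1..q}. x a i \<in> {1..n}) \<and>
    (\<forall>a b. 1 \<le> a \<and> a < b \<and> b \<le> N \<longrightarrow> lt_r q r (x a) (x b))"

lemma F_qr_eq_Max_lt_r_chain: "F_qr q r n = Max {N. \<exists>x. lt_r_chain q r n N x}"
  by (simp add: F_qr_def lt_r_chain_def)

lemma lt_r_chain_prefix: "lt_r_chain q r n M x \<Longrightarrow> N \<le> M \<Longrightarrow> lt_r_chain q r n N x"
  by (auto simp: lt_r_chain_def)

lemma lt_r_chain_length_le:
  assumes "1 \<le> r" and chain: "lt_r_chain q r n N x"
  shows "N \<le> n ^ q"
proof -
  define g where "g a = restrict (x a) {1..q}" for a
  have "g a \<noteq> g b" if "1 \<le> a" "a < b" "b \<le> N" for a b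
  proof -
    have "card {i \<in> {1..q}. x a i < x b i} \<ge> 1"
      using chain that assms(1) unfolding lt_r_chain_def lt_r_def by force
    then obtain i where "i \<in> {1..q}" and "x a i < x b i"
      by (metis (no_types, lifting) card.empty empty_Collect_eq not_one_le_zero)
    then show ?thesis
      unfolding g_def by (metis less_irrefl restrict_apply')
  qed
  then have "inj_on g {1..N}"
    by (intro inj_onI) (metis atLeastAtMost_iff linorder_neqE_nat)
  moreover have "g ` {1..N} \<subseteq> (\<Pi>\<^sub>E i \<in> {1..q}. {1..n})"
    using chain unfolding g_def lt_r_chain_def by auto
  ultimately have "card {1..N} \<le> card (\<Pi>\<^sub>E i \<in> {1..q}. {1..n::nat})"
    by (metis card_inj_on_le finite_PiE finite_atLeastAtMost)
  then show ?thesis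
    by (simp add: card_PiE)
qed

lemma le_F_qr_iff:
  assumes "1 \<le> r"
  shows "N \<le> F_qr q r n \<longleftrightarrow> (\<exists>x. lt_r_chain q r n N x)"
proof -
  let ?S = "{N. \<exists>x. lt_r_chain q r n N x}"
  have finite: "finite ?S"
    by (rule finite_subset[of _ "{..n ^ q}"]) (auto dest: lt_r_chain_length_le[OF assms])
  have "0 \<in> ?S"
    by (simp add: lt_r_chain_def)
  then have "Max ?S \<in> ?S"
    using Max_in[OF finite] by blast
  moreover have "\<And>M. M \<in> ?S \<Longrightarrow> M \<le> Max ?S"
    using Max_ge[OF finite] .
  ultimately show ?thesis
    unfolding F_qr_eq_Max_lt_r_chain by (blast intro: lt_r_chain_prefix)
qed

lemma lt_r_all_but_one_iff:
  assumes "1 \<le> q"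
  shows "lt_r q (q - 1) u v \<longleftrightarrow> (\<exists>k \<in> {1..q}. \<forall>i \<in> {1..q} - {k}. u i < v i)"
proof
  assume lt: "lt_r q (q - 1) u v"
  show "\<exists>k \<in> {1..q}. \<forall>i \<in> {1..q} - {k}. u i < v i"
  proof (cases "\<forall>i \<in> {1..q}. u i < v i")
    case True
    then show ?thesis
      using assms by auto
  next
    case False
    then obtain k where k: "k \<in> {1..q}" "\<not> u k < v k"
      by blast
    then have "{i \<in> {1..q}. u i < v i} \<subseteq> {1..q} - {k}"
      by auto
    moreover have "card ({1..q} - {k}) \<le> card {i \<in> {1..q}. u i < v i}"
      using lt k(1) unfolding lt_r_def by simp
    ultimately have "{i \<in> {1..q}. u i < v i} = {1..q} - {k}"
      by (intro card_subset_eq) (auto intro: le_antisym card_mono)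
    then show ?thesis
      using k(1) by blast
  qed
next
  assume "\<exists>k \<in> {1..q}. \<forall>i \<in> {1..q} - {k}. u i < v i"
  then obtain k where k: "k \<in> {1..q}" and "{1..q} - {k} \<subseteq> {i \<in> {1..q}. u i < v i}"
    by blast
  then have "card ({1..q} - {k}) \<le> card {i \<in> {1..q}. u i < v i}"
    by (intro card_mono) auto
  then show "lt_r q (q - 1) u v"
    using k unfolding lt_r_def by simp
qed

definition longest_avoiding :: "nat \<Rightarrow> (nat \<Rightarrow> nat \<Rightarrow> nat) \<Rightarrow> nat \<Rightarrow> nat \<Rightarrow> nat" where
  "longest_avoiding N c a i =
    Max {length vs | vs. mono_path N vs \<and> last vs = a \<and> i \<notin> path_colours c vs}"

lemma longest_avoiding_attained:
  assumes "a \<in> {1..N}"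
  obtains vs where "mono_path N vs" and "last vs = a" and "i \<notin> path_colours c vs"
    and "length vs = longest_avoiding N c a i"
proof -
  have "mono_path N [a] \<and> last [a] = a \<and> i \<notin> path_colours c [a]"
    using assms by (simp add: mono_path_def path_colours_def)
  then have "longest_avoiding N c a i
      \<in> {length vs | vs. mono_path N vs \<and> last vs = a \<and> i \<notin> path_colours c vs}"
    unfolding longest_avoiding_def by (intro Max_in finite_mono_path_lengths) blast
  then show ?thesis
    using that by force
qed

lemma longest_avoiding_range:
  assumes "1 \<le> N" and colouring: "edge_colouring q N c" and f_col_le: "f_col N (q - 1) c \<le> n"
    and a: "a \<in> {1..N}" and i: "i \<in> {1..q}"
  shows "longest_avoiding N c a i \<in> {1..n}"
proof -
  obtain vs where vs: "mono_path N vs" "i \<notin> path_colours c vs"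
    "length vs = longest_avoiding N c a i"
    using longest_avoiding_attained[OF a] by metis
  have "path_colours c vs \<subseteq> {1..q} - {i}"
    using path_colours_subset[OF colouring vs(1)] vs(2) by blast
  then have "card (path_colours c vs) \<le> q - 1"
    using card_mono[of "{1..q} - {i}" "path_colours c vs"] i by simp
  then have "length vs \<le> n"
    using f_col_le vs(1) unfolding f_col_le_iff[OF assms(1)] by blast
  moreover have "1 \<le> length vs"
    using vs(1) by (cases vs) (simp_all add: mono_path_def)
  ultimately show ?thesis
    using vs(3) by simp
qed

lemma longest_avoiding_less:
  assumes "1 \<le> a" and "a < b" and "b \<le> N" and "i \<noteq> c a b"
  shows "longest_avoiding N c a i < longest_avoiding N c b i"
proof -
  have "a \<in> {1..N}"
    using assms(1-3) by simp
  then obtain vs where vs: "mono_path N vs" "last vs = a" "i \<notin> path_colours c vs"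
    "length vs = longest_avoiding N c a i"
    by (rule longest_avoiding_attained)
  have "vs \<noteq> []"
    using vs(1) by (simp add: mono_path_def)
  then have "path_colours c (vs @ [b]) \<subseteq> insert (c a b) (path_colours c vs)"
    using path_colours_snoc_subset vs(2) by metis
  then have "i \<notin> path_colours c (vs @ [b])"
    using vs(3) assms(4) by blast
  moreover have "mono_path N (vs @ [b])"
    using mono_path_snoc[OF vs(1)] vs(2) assms by simp
  ultimately have "length (vs @ [b])
      \<in> {length ws | ws. mono_path N ws \<and> last ws = b \<and> i \<notin> path_colours c ws}"
    by fastforce
  then have "length (vs @ [b]) \<le> longest_avoiding N c b i"
    unfolding longest_avoiding_def by (rule Max_ge[OF finite_mono_path_lengths])
  then show ?thesis
    using vs(4) by simp
qed

lemma colouring_to_lt_r_chain: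
  assumes "1 \<le> q" and "1 \<le> N" and colouring: "edge_colouring q N c"
    and "f_col N (q - 1) c \<le> n"
  shows "lt_r_chain q (q - 1) n N (longest_avoiding N c)"
proof -
  have "lt_r q (q - 1) (longest_avoiding N c a) (longest_avoiding N c b)"
    if ab: "1 \<le> a" "a < b" "b \<le> N" for a b
  proof -
    have "c a b \<in> {1..q}"
      using colouring ab unfolding edge_colouring_def by blast
    then show ?thesis
      unfolding lt_r_all_but_one_iff[OF assms(1)] using longest_avoiding_less[OF ab] by blast
  qed
  then show ?thesis
    using longest_avoiding_range[OF assms(2-4)] unfolding lt_r_chain_def by blast
qed

lemma mono_path_misses_colour:
  assumes "edge_colouring q N c" and "mono_path N vs" and "card (path_colours c vs) < q"
  obtains i where "i \<in> {1..q}" and "i \<notin> path_colours c vs"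
proof -
  have "\<not> {1..q} \<subseteq> path_colours c vs"
  proof
    assume all_colours: "{1..q} \<subseteq> path_colours c vs"
    have "finite (path_colours c vs)"
      using path_colours_subset[OF assms(1,2)] by (rule finite_subset) simp
    then have "card {1..q} \<le> card (path_colours c vs)"
      using all_colours by (rule card_mono)
    then show False
      using assms(3) by simp
  qed
  then show ?thesis
    using that by blast
qed

lemma sorted_along_mono_path_avoiding:
  fixes y :: "nat \<Rightarrow> 'a :: order"
  assumes vs: "mono_path N vs" and i: "i \<notin> path_colours c vs"
    and y_less: "\<And>a b. 1 \<le> a \<Longrightarrow> a < b \<Longrightarrow> b \<le> N \<Longrightarrow> i \<noteq> c a b \<Longrightarrow> y a < y b"
  shows "sorted_wrt (<) (map y vs)"
proof -
  have "y (vs ! k) < y (vs ! Suc k)" if k: "Suc k < length vs" for k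
  proof -
    have edge: "1 \<le> vs ! k" "vs ! k < vs ! Suc k" "vs ! Suc k \<le> N"
      using mono_path_edge[OF vs, of k] k by simp_all
    have "c (vs ! k) (vs ! Suc k) \<in> path_colours c vs"
      using k unfolding path_colours_def Suc_eq_plus1 by blast
    then show ?thesis
      using y_less[OF edge] i by blast
  qed
  then show ?thesis
    by (simp add: sorted_wrt_iff_nth_Suc_transp)
qed

lemma lt_r_chain_to_colouring:
  assumes "1 \<le> q" and "1 \<le> N" and chain: "lt_r_chain q (q - 1) n N x"
  shows "\<exists>c. edge_colouring q N c \<and> f_col N (q - 1) c \<le> n"
proof -
  define c where "c a b = (SOME k. k \<in> {1..q} \<and> (\<forall>i \<in> {1..q} - {k}. x a i < x b i))" for a b
  have c: "c a b \<in> {1..q} \<and> (\<forall>i \<in> {1..q} - {c a b}. x a i < x b i)"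
    if "1 \<le> a" "a < b" "b \<le> N" for a b
  proof -
    have "\<exists>k. k \<in> {1..q} \<and> (\<forall>i \<in> {1..q} - {k}. x a i < x b i)"
      using chain that unfolding lt_r_chain_def lt_r_all_but_one_iff[OF assms(1)] by blast
    then show ?thesis
      unfolding c_def by (rule someI_ex)
  qed
  then have colouring: "edge_colouring q N c"
    unfolding edge_colouring_def by blast
  have "length vs \<le> n" if vs: "mono_path N vs" and card: "card (path_colours c vs) \<le> q - 1" for vs
  proof -
    have "card (path_colours c vs) < q"
      using card assms(1) by linarith
    then obtain i where i: "i \<in> {1..q}" "i \<notin> path_colours c vs"
      by (rule mono_path_misses_colour[OF colouring vs])
    have "sorted_wrt (<) (map (\<lambda>a. x a i) vs)"
      using vs i(2) by (rule sorted_along_mono_path_avoiding) (use c i(1) in blast)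
    moreover have "set (map (\<lambda>a. x a i) vs) \<subseteq> {1..n}"
      using chain vs i(1) unfolding lt_r_chain_def mono_path_def by auto
    ultimately have "length (map (\<lambda>a. x a i) vs) \<le> n"
      by (rule strict_sorted_length_le)
    then show ?thesis
      by simp
  qed
  then have "f_col N (q - 1) c \<le> n"
    using f_col_le_iff[OF assms(2)] by blast
  then show ?thesis
    using colouring by blast
qed

theorem proposition3p1:
  fixes q N n :: nat
  assumes "q \<ge> 2" and "N \<ge> 1" and "n \<ge> 1"
  shows "f_qr q (q - 1) N \<le> n \<longleftrightarrow> F_qr q (q - 1) n \<ge> N"
proof -
  have q: "1 \<le> q" and r: "1 \<le> q - 1"
    using assms(1) by simp_all
  show ?thesis
  proof
    assume "f_qr q (q - 1) N \<le> n"
    then obtain c where "edge_colouring q N c" and "f_col N (q - 1) c \<le> n"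
      unfolding f_qr_le_iff[OF q assms(2)] by blast
    then have "lt_r_chain q (q - 1) n N (longest_avoiding N c)"
      by (rule colouring_to_lt_r_chain[OF q assms(2)])
    then show "N \<le> F_qr q (q - 1) n"
      unfolding le_F_qr_iff[OF r] by blast
  next
    assume "N \<le> F_qr q (q - 1) n"
    then obtain x where "lt_r_chain q (q - 1) n N x"
      unfolding le_F_qr_iff[OF r] by blast
    then show "f_qr q (q - 1) N \<le> n"
      unfolding f_qr_le_iff[OF q assms(2)] by (rule lt_r_chain_to_colouring[OF q assms(2)])
  qed
qed

end
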